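(* Let $D \subseteq L$ be a total clone on $\{0,1\}$ such that $D \subseteq B$ for some $B \in \{T_0, T_1, S\}$. Then $\mathcal{I}_{\mathrm{str}}(D)$ has the cardinality of the continuum.
   Context: Let $\mathbf{2}=\{0,1\}$. A partial function of arity $n$ on $\mathbf{2}$ is a map $f:\operatorname{dom} f\to\mathbf{2}$ with $\operatorname{dom} f\subseteq \mathbf{2}^n$; it is total if $\operatorname{dom} f=\mathbf{2}^n$. $P_{\mathbf{2}}$ is the set of all partial functions, $O_{\mathbf{2}}$ the set of total ones. Composition $F=f(g_1,\dots,g_n)$ is given by $F(\mathbf{x})=f(g_1(\mathbf{x}),\dots,g_n(\mathbf{x}))$ on $\operatorname{dom} F=\{\mathbf{x}\in\bigcap_i\operatorname{dom} g_i : (g_1(\mathbf{x}),\dots,g_n(\mathbf{x}))\in\operatorname{dom} f\}$. A partial clone is a composition-closed subset of $P_{\mathbf{2}}$ containing all projections; a total clone is one contained in $O_{\mathbf{2}}$. A partial clone $X$ is strong if it contains every restriction of each of its members. For a total clone $C$, $\mathcal{I}_{\mathrm{str}}(C)$ is the set of all strong partial clones $X$ with $X\cap O_{\mathbf{2}}=C$. $L$ is the clone of linear functions $a_0\oplus a_1x_1\oplus\cdots\oplus a_nx_n$; $T_a$ is the clone of total functions with $f(a,\dots,a)=a$; $S$ is the clone of self-dual total functions. *)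

theory Defs
  imports Complex_Main "HOL-Library.Equipollence"
begin

text \<open>A partial function of arity n on 2 = {False, True} is represented as a pair (n, f)
  where f maps argument tuples (bool lists of length n) to an optional value;
  the domain of f is {x. f x \<noteq> None} and must consist of lists of length n.\<close>

type_synonym pfun = "nat \<times> (bool list \<Rightarrow> bool option)"

definition P2 :: "pfun set" where
  "P2 = {(n, f). n \<ge> 1 \<and> (\<forall>x. f x \<noteq> None \<longrightarrow> length x = n)}"

definition O2 :: "pfun set" where
  "O2 = {(n, f). (n, f) \<in> P2 \<and> (\<forall>x. length x = n \<longrightarrow> f x \<noteq> None)}"

definition proj :: "nat \<Rightarrow> nat \<Rightarrow> pfun" where
  "proj n i = (n, \<lambda>x. if length x = n then Some (x ! i) else None)"

definition pcomp :: "pfun \<Rightarrow> nat \<Rightarrow> (nat \<Rightarrow> bool list \<Rightarrow> bool option) \<Rightarrow> pfun" where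
  "pcomp F m gs = (case F of (n, f) \<Rightarrow>
     (m, \<lambda>x. if length x = m \<and> (\<forall>i<n. gs i x \<noteq> None)
             then f (map (\<lambda>i. the (gs i x)) [0..<n]) else None))"

definition partial_clone :: "pfun set \<Rightarrow> bool" where
  "partial_clone X \<longleftrightarrow> X \<subseteq> P2
     \<and> (\<forall>n i. 1 \<le> n \<longrightarrow> i < n \<longrightarrow> proj n i \<in> X)
     \<and> (\<forall>n f m gs. (n, f) \<in> X \<longrightarrow> (\<forall>i<n. (m, gs i) \<in> X) \<longrightarrow> pcomp (n, f) m gs \<in> X)"

definition total_clone :: "pfun set \<Rightarrow> bool" where
  "total_clone C \<longleftrightarrow> partial_clone C \<and> C \<subseteq> O2"

definition restriction_of :: "pfun \<Rightarrow> pfun \<Rightarrow> bool" where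
  "restriction_of G F \<longleftrightarrow> fst G = fst F \<and> (\<forall>x. snd G x \<noteq> None \<longrightarrow> snd G x = snd F x)"

definition strong :: "pfun set \<Rightarrow> bool" where
  "strong X \<longleftrightarrow> partial_clone X \<and> (\<forall>F\<in>X. \<forall>G. restriction_of G F \<longrightarrow> G \<in> X)"

definition I_str :: "pfun set \<Rightarrow> pfun set set" where
  "I_str C = {X. strong X \<and> X \<inter> O2 = C}"

text \<open>Linear functions a_0 \<oplus> a_1 x_1 \<oplus> ... \<oplus> a_n x_n.\<close>
definition Lin :: "pfun set" where
  "Lin = {(n, f). (n, f) \<in> O2 \<and> (\<exists>a0 as. length as = n \<and>
      (\<forall>x. length x = n \<longrightarrow> f x = Some (foldr (\<noteq>) (map2 (\<and>) as x) a0)))}"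

definition T :: "bool \<Rightarrow> pfun set" where
  "T a = {(n, f). (n, f) \<in> O2 \<and> f (replicate n a) = Some a}"

definition S :: "pfun set" where
  "S = {(n, f). (n, f) \<in> O2 \<and> (\<forall>x. length x = n \<longrightarrow> f (map Not x) = map_option Not (f x))}"

end

theory Submission
  imports Defs "HOL-Analysis.Abstract_Topology_2"
begin

text \<open>
  Upper bound: \<open>P2\<close> is countable, so there are at most continuum many sets of partial functions.

  Lower bound: for a family of relations \<open>F k \<subseteq> 2^(N k)\<close> and \<open>A \<subseteq> \<nat>\<close> let \<open>X A\<close> consist of the
  restrictions of members of \<open>D\<close> together with all partial functions whose domain is carried by
  a tuple of members of \<open>D\<close> into some \<open>F j\<close> with \<open>j \<in> A\<close>. This is a strong partial clone, and its
  total part is \<open>D\<close> as soon as no such tuple carries a whole cube into some \<open>F j\<close>. The indicator of a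
  point \<open>p \<in> F k\<close>, defined on \<open>F k\<close>, lies in \<open>X A\<close> iff \<open>k \<in> A\<close>, provided that (i) it is not the
  restriction of a linear function, which holds if \<open>p = z1 + z2 + z3\<close> for some \<open>z1, z2, z3 \<in> F k\<close>
  other than \<open>p\<close>, and (ii) tuples of members of \<open>D\<close> carry \<open>F k\<close> into \<open>F j\<close> only if \<open>j = k\<close>.

  The \<open>F k\<close> are weight slices of rapidly growing dimensions. Since \<open>D \<subseteq> L\<close>, tuples of members
  of \<open>D\<close> are affine maps, which moreover fix the constant vector \<open>a\<close> (if \<open>D \<subseteq> T a\<close>) or commute with
  complementation (if \<open>D \<subseteq> S\<close>). Such a map cannot go from a slice to a much smaller one, since by
  pigeonhole it is invariant under flipping many pairs of coordinates; nor to a much larger one,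
  since a slice contains a block decomposition of a constant vector with too few blocks to reach
  the weight of the image of that vector.
\<close>

section \<open>Bit vectors and weight slices\<close>

definition bxor :: "bool list \<Rightarrow> bool list \<Rightarrow> bool list" where
  "bxor x y = map2 (\<noteq>) x y"

definition indicator_list :: "nat \<Rightarrow> nat set \<Rightarrow> bool list" where
  "indicator_list n A = map (\<lambda>i. i \<in> A) [0..<n]"

definition bsupport :: "bool list \<Rightarrow> nat set" where
  "bsupport x = {i. i < length x \<and> x ! i}"

definition weight_slice :: "nat \<Rightarrow> nat \<Rightarrow> bool list set" where
  "weight_slice n w = {x. length x = n \<and> card (bsupport x) = w}"

lemma length_bxor [simp]: "length (bxor x y) = min (length x) (length y)"
  by (simp add: bxor_def)

lemma nth_bxor [simp]: "i < length x \<Longrightarrow> i < length y \<Longrightarrow> bxor x y ! i = (x ! i \<noteq> y ! i)"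
  by (simp add: bxor_def)

lemma length_indicator_list [simp]: "length (indicator_list n A) = n"
  by (simp add: indicator_list_def)

lemma nth_indicator_list [simp]: "i < n \<Longrightarrow> indicator_list n A ! i = (i \<in> A)"
  by (simp add: indicator_list_def)

lemma bxor_replicate_False: "length x = n \<Longrightarrow> bxor x (replicate n False) = x"
  by (rule nth_equalityI) auto

lemma bxor_commute: "bxor x y = bxor y x"
  by (auto simp: bxor_def list_eq_iff_nth_eq)

lemma bxor_assoc: "bxor (bxor x y) z = bxor x (bxor y z)"
  by (rule nth_equalityI) auto

lemma bxor_self: "bxor x x = replicate (length x) False"
  by (rule nth_equalityI) auto

lemma indicator_list_in_weight_slice:
  assumes "A \<subseteq> {..<n}" "card A = w"
  shows "indicator_list n A \<in> weight_slice n w"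
proof -
  have "bsupport (indicator_list n A) = A \<inter> {..<n}"
    by (auto simp: bsupport_def)
  with assms show ?thesis
    by (simp add: weight_slice_def Int_absorb2)
qed

lemma card_bsupport_map_Not: "card (bsupport (map Not x)) = length x - card (bsupport x)"
proof -
  have "bsupport (map Not x) = {..<length x} - bsupport x"
    by (auto simp: bsupport_def)
  moreover have "bsupport x \<subseteq> {..<length x}"
    by (auto simp: bsupport_def)
  ultimately show ?thesis
    by (simp add: card_Diff_subset finite_subset)
qed

lemma card_bsupport_eq_sum: "card (bsupport x) = (\<Sum>q<length x. of_bool (x ! q))"
proof -
  have "bsupport x = {..<length x} \<inter> {q. x ! q}"
    by (auto simp: bsupport_def)
  then show ?thesis
    by simp
qed

lemma replicate_True_notin_weight_slice:
  assumes "w < n"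
  shows "replicate n True \<notin> weight_slice n w"
proof -
  have "bsupport (replicate n True) = {..<n}"
    by (auto simp: bsupport_def)
  with assms show ?thesis
    by (simp add: weight_slice_def)
qed

lemma replicate_False_notin_weight_slice:
  assumes "0 < w"
  shows "replicate n False \<notin> weight_slice n w"
proof -
  have "bsupport (replicate n False) = {}"
    by (auto simp: bsupport_def)
  with assms show ?thesis
    by (simp add: weight_slice_def)
qed

lemma map_Not_in_weight_slice:
  "x \<in> weight_slice n w \<Longrightarrow> map Not x \<in> weight_slice n w \<Longrightarrow> n = 2 * w"
  by (auto simp: weight_slice_def card_bsupport_map_Not)

lemma weight_slice_xor_triple:
  assumes "2 \<le> w" "w + 2 \<le> n"
  shows "\<exists>p z1 z2 z3. {p, z1, z2, z3} \<subseteq> weight_slice n w \<and> p \<notin> {z1, z2, z3} \<and>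
    bxor z1 (bxor z2 z3) = p"
proof -
  let ?p = "indicator_list n {..<w}"
  let ?z1 = "indicator_list n ({..<w} - {0} \<union> {w})"
  let ?z2 = "indicator_list n ({..<w} - {1} \<union> {w + 1})"
  let ?z3 = "indicator_list n ({..<w} - {0, 1} \<union> {w, w + 1})"
  have "card ({..<w} - {0, 1} \<union> {w, w + 1}) = card ({..<w} - {0, 1}) + 2"
    by (subst card_Un_disjoint) auto
  also have "card ({..<w} - {0, 1}) = w - 2"
    using assms(1) by (subst card_Diff_subset) auto
  finally have "?z3 \<in> weight_slice n w"
    using assms by (intro indicator_list_in_weight_slice) auto
  moreover have "?p \<in> weight_slice n w" "?z1 \<in> weight_slice n w" "?z2 \<in> weight_slice n w"
    using assms by (auto intro!: indicator_list_in_weight_slice)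
  moreover have "?p \<notin> {?z1, ?z2, ?z3}"
  proof -
    have "?p ! 0 \<noteq> ?z1 ! 0" "?p ! 1 \<noteq> ?z2 ! 1" "?p ! 0 \<noteq> ?z3 ! 0"
      using assms by auto
    then show ?thesis
      by auto
  qed
  moreover have "bxor ?z1 (bxor ?z2 ?z3) = ?p"
    by (rule nth_equalityI) auto
  ultimately show ?thesis
    by blast
qed

definition bxor_sum :: "nat \<Rightarrow> bool list list \<Rightarrow> bool list" where
  "bxor_sum n xs = foldr bxor xs (replicate n False)"

lemma bxor_sum_Nil [simp]: "bxor_sum n [] = replicate n False"
  by (simp add: bxor_sum_def)

lemma bxor_sum_Cons [simp]: "bxor_sum n (x # xs) = bxor x (bxor_sum n xs)"
  by (simp add: bxor_sum_def)

lemma length_bxor_sum: "\<forall>x\<in>set xs. length x = n \<Longrightarrow> length (bxor_sum n xs) = n"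
  by (induction xs) auto

lemma nth_bxor_sum:
  "\<forall>x\<in>set xs. length x = n \<Longrightarrow> q < n \<Longrightarrow>
     bxor_sum n xs ! q = odd (length (filter (\<lambda>x. x ! q) xs))"
  by (induction xs) (auto simp: length_bxor_sum)

lemma sum_column_counts_weight_slice:
  assumes "set xs \<subseteq> weight_slice n w"
  shows "(\<Sum>q<n. length (filter (\<lambda>x. x ! q) xs)) = length xs * w"
  using assms
proof (induction xs)
  case (Cons x xs)
  then have x: "length x = n" "card (bsupport x) = w"
    by (auto simp: weight_slice_def)
  have "(\<Sum>q<n. length (filter (\<lambda>y. y ! q) (x # xs)))
      = (\<Sum>q<n. of_bool (x ! q) + length (filter (\<lambda>y. y ! q) xs))"
    by (intro sum.cong) auto
  also have "\<dots> = (\<Sum>q<n. of_bool (x ! q)) + (\<Sum>q<n. length (filter (\<lambda>y. y ! q) xs))"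
    by (rule sum.distrib)
  also have "\<dots> = w + length xs * w"
    using Cons x card_bsupport_eq_sum[of x] by simp
  finally show ?case
    by simp
qed simp

lemma weight_slice_sum_ones_bound:
  assumes xs: "set xs \<subseteq> weight_slice n w" and sum: "bxor_sum n xs = replicate n True"
  shows "n \<le> length xs * w"
proof -
  have len: "\<forall>x\<in>set xs. length x = n"
    using xs by (auto simp: weight_slice_def)
  have "odd (length (filter (\<lambda>x. x ! q) xs))" if "q < n" for q
    using nth_bxor_sum[OF len that] sum that by simp
  then have "1 \<le> length (filter (\<lambda>x. x ! q) xs)" if "q < n" for q
    using odd_pos that by (metis Suc_leI One_nat_def)
  then have "(\<Sum>q<n. 1) \<le> (\<Sum>q<n. length (filter (\<lambda>x. x ! q) xs))"
    by (intro sum_mono) simp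
  then show ?thesis
    using sum_column_counts_weight_slice[OF xs] by simp
qed

lemma weight_slice_sum_zeros_bound:
  assumes xs: "set xs \<subseteq> weight_slice n w" and sum: "bxor_sum n xs = replicate n False"
    and odd: "odd (length xs)"
  shows "length xs * w \<le> n * (length xs - 1)"
proof -
  have len: "\<forall>x\<in>set xs. length x = n"
    using xs by (auto simp: weight_slice_def)
  have "length (filter (\<lambda>x. x ! q) xs) \<le> length xs - 1" if "q < n" for q
  proof -
    have "even (length (filter (\<lambda>x. x ! q) xs))"
      using nth_bxor_sum[OF len that] sum that by simp
    then have "length (filter (\<lambda>x. x ! q) xs) \<noteq> length xs"
      using odd by metis
    then show ?thesis
      using length_filter_le[of "\<lambda>x. x ! q" xs] by linarith
  qed
  then have "(\<Sum>q<n. length (filter (\<lambda>x. x ! q) xs)) \<le> (\<Sum>q<n. length xs - 1)"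
    by (intro sum_mono) auto
  then show ?thesis
    using sum_column_counts_weight_slice[OF xs] by (simp add: mult.commute)
qed

section \<open>Affine maps between cubes\<close>

text \<open>Over GF(2) a map is affine iff it preserves the ternary operation \<open>x + y + z\<close>.\<close>
definition affine_bmap :: "(bool list \<Rightarrow> bool list) \<Rightarrow> nat \<Rightarrow> nat \<Rightarrow> bool" where
  "affine_bmap G n d \<longleftrightarrow> (\<forall>x. length x = n \<longrightarrow> length (G x) = d) \<and>
     (\<forall>x y z. length x = n \<longrightarrow> length y = n \<longrightarrow> length z = n \<longrightarrow>
        G (bxor x (bxor y z)) = bxor (G x) (bxor (G y) (G z)))"

lemma affine_bmap_length: "affine_bmap G n d \<Longrightarrow> length x = n \<Longrightarrow> length (G x) = d"
  by (simp add: affine_bmap_def)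

lemma affine_bmap_bxor3:
  "affine_bmap G n d \<Longrightarrow> length x = n \<Longrightarrow> length y = n \<Longrightarrow> length z = n \<Longrightarrow>
     G (bxor x (bxor y z)) = bxor (G x) (bxor (G y) (G z))"
  by (simp add: affine_bmap_def)

lemma affine_bmap_bxor_sum_odd:
  assumes G: "affine_bmap G n d" and len: "\<forall>x\<in>set xs. length x = n" and odd: "odd (length xs)"
  shows "G (bxor_sum n xs) = bxor_sum d (map G xs)"
  using len odd
proof (induction xs rule: induct_list012)
  case (2 x)
  then show ?case
    using affine_bmap_length[OF G] by (simp add: bxor_replicate_False)
next
  case (3 x y zs)
  then have "length (bxor_sum n zs) = n"
    by (simp add: length_bxor_sum)
  then show ?case
    using 3 affine_bmap_bxor3[OF G] by simp
qed simp

lemma affine_bmap_bxor_sum_even_self_dual: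
  assumes G: "affine_bmap G n d" and self_dual: "\<forall>x. length x = n \<longrightarrow> G (map Not x) = map Not (G x)"
    and len: "\<forall>x\<in>set xs. length x = n" and even: "even (length xs)" and "xs \<noteq> []"
    and sum: "bxor_sum n xs = replicate n True"
  shows "bxor_sum d (map G xs) = replicate d True"
proof -
  obtain x ys where xs: "xs = x # ys"
    using \<open>xs \<noteq> []\<close> by (cases xs) auto
  have ys: "\<forall>y\<in>set ys. length y = n" "odd (length ys)" and x: "length x = n"
    using len even xs by auto
  have "bxor x (bxor_sum n ys) ! i" if "i < n" for i
    using sum xs that by simp
  then have "bxor_sum n ys = map Not x"
    using x length_bxor_sum[OF ys(1)] by (intro nth_equalityI) auto
  then have "bxor_sum d (map G xs) = bxor (G x) (map Not (G x))"
    using affine_bmap_bxor_sum_odd[OF G ys] self_dual x xs by simp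
  also have "\<dots> = replicate d True"
    using affine_bmap_length[OF G x] by (intro nth_equalityI) auto
  finally show ?thesis .
qed

lemma not_inj_on_into_lists_length:
  fixes f :: "'a \<Rightarrow> bool list"
  assumes "\<And>x. x \<in> M \<Longrightarrow> length (f x) = d" and "2 ^ d < card M"
  shows "\<not> inj_on f M"
proof -
  have "f ` M \<subseteq> {xs :: bool list. length xs = d}"
    using assms(1) by auto
  then have "card (f ` M) \<le> card {xs :: bool list. length xs = d}"
    using finite_lists_length_eq[of "UNIV :: bool set" d] by (intro card_mono) simp_all
  also have "\<dots> = 2 ^ d"
    using card_lists_length_eq[of "UNIV :: bool set" d] by simp
  finally show ?thesis
    using assms(2) by (metis card_image not_le)
qed

text \<open>Two unit vectors with the same image under an affine map can be flipped together without
  changing the value; by pigeonhole such pairs exist as long as more than \<open>2^d\<close> coordinates remain.\<close>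
lemma affine_bmap_flip_invariant:
  assumes G: "affine_bmap G n d" and z: "length z = n"
  shows "finite M \<Longrightarrow> M \<subseteq> {..<n} \<Longrightarrow> 2 ^ d + 2 * r \<le> card M \<Longrightarrow>
    \<exists>P\<subseteq>M. card P = 2 * r \<and> G (bxor z (indicator_list n P)) = G z"
proof (induction r arbitrary: M)
  case 0
  have "indicator_list n {} = replicate n False"
    by (rule nth_equalityI) auto
  then show ?case
    using z by (intro exI[of _ "{}"]) (simp add: bxor_replicate_False)
next
  case (Suc r)
  let ?e = "\<lambda>p. G (indicator_list n {p})"
  have "\<not> inj_on ?e M"
    using Suc.prems(3) affine_bmap_length[OF G] by (intro not_inj_on_into_lists_length) auto
  then obtain p q where pq: "p \<in> M" "q \<in> M" "p \<noteq> q" "?e p = ?e q"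
    by (auto simp: inj_on_def)
  have "card (M - {p, q}) = card M - 2"
    using pq Suc.prems(1) by (simp add: card_Diff_subset)
  then have "2 ^ d + 2 * r \<le> card (M - {p, q})"
    using Suc.prems(3) by simp
  then obtain P where P: "P \<subseteq> M - {p, q}" "card P = 2 * r" "G (bxor z (indicator_list n P)) = G z"
    using Suc.IH[of "M - {p, q}"] Suc.prems(1,2) by blast
  have "p < n" "q < n"
    using pq Suc.prems(2) by auto
  then have "indicator_list n (insert p (insert q P))
      = bxor (indicator_list n P) (bxor (indicator_list n {p}) (indicator_list n {q}))"
    using P(1) pq by (intro nth_equalityI) auto
  then have "G (bxor z (indicator_list n (insert p (insert q P))))
      = G (bxor (bxor z (indicator_list n P)) (bxor (indicator_list n {p}) (indicator_list n {q})))"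
    by (simp add: bxor_assoc)
  also have "\<dots> = bxor (G (bxor z (indicator_list n P))) (bxor (?e p) (?e q))"
    using affine_bmap_bxor3[OF G] z by simp
  also have "\<dots> = G z"
    using P(3) pq(4) affine_bmap_length[OF G z] affine_bmap_length[OF G, of "indicator_list n {q}"]
    by (simp add: bxor_self bxor_replicate_False)
  finally have flip: "G (bxor z (indicator_list n (insert p (insert q P)))) = G z" .
  have "finite P" "p \<notin> P" "q \<notin> P"
    using P(1) Suc.prems(1) finite_subset by auto
  then have "card (insert p (insert q P)) = 2 * Suc r"
    using P(2) pq(3) by simp
  then show ?case
    using flip P(1) pq(1,2) by (intro exI[of _ "insert p (insert q P)"]) auto
qed

section \<open>Rigidity of affine maps between weight slices\<close>

text \<open>The block count is odd for \<open>e = 0\<close> (used for \<open>T a\<close>) and even for \<open>e = 1\<close> (used for \<open>S\<close>);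
  the block size outgrows exponentially all earlier slice dimensions.\<close>
definition block_count :: "nat \<Rightarrow> nat \<Rightarrow> nat" where
  "block_count e k = 2 * k + 3 + e"

primrec block_size :: "nat \<Rightarrow> nat \<Rightarrow> nat" where
  "block_size e 0 = 2"
| "block_size e (Suc k) = 2 ^ (block_count e k * block_size e k)"

definition slice_dim :: "nat \<Rightarrow> nat \<Rightarrow> nat" where
  "slice_dim e k = block_count e k * block_size e k"

lemma block_size_ge_2: "2 \<le> block_size e k"
proof (induction k)
  case (Suc k)
  then have "1 \<le> block_count e k * block_size e k"
    by (simp add: block_count_def)
  then have "2 ^ 1 \<le> (2::nat) ^ (block_count e k * block_size e k)"
    by (intro power_increasing) auto
  then show ?case
    by simp
qed simp

lemma three_block_size_le_slice_dim: "3 * block_size e k \<le> slice_dim e k"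
  by (simp add: slice_dim_def block_count_def)

lemma slice_dim_Suc_ge: "slice_dim e k \<le> slice_dim e (Suc k)"
proof -
  have "slice_dim e k < 2 ^ slice_dim e k"
    by (rule less_exp)
  also have "\<dots> \<le> slice_dim e (Suc k)"
    by (simp add: slice_dim_def block_count_def)
  finally show ?thesis
    by simp
qed

lemma two_pow_slice_dim_le_block_size:
  assumes "j < k"
  shows "2 ^ slice_dim e j \<le> block_size e k"
proof -
  obtain k' where k: "k = Suc k'" "j \<le> k'"
    using assms by (cases k) auto
  have "slice_dim e j \<le> slice_dim e k'"
    by (rule lift_Suc_mono_le[of "slice_dim e", OF slice_dim_Suc_ge k(2)])
  then have "2 ^ slice_dim e j \<le> (2::nat) ^ slice_dim e k'"
    by (intro power_increasing) auto
  then show ?thesis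
    using k by (simp add: slice_dim_def)
qed

definition block :: "nat \<Rightarrow> nat \<Rightarrow> nat set" where
  "block s i = {i * s..<(i + 1) * s}"

lemma block_subset: "i < t \<Longrightarrow> block s i \<subseteq> {..<t * s}"
proof -
  assume "i < t"
  then have "(i + 1) * s \<le> t * s"
    by (intro mult_le_mono1) simp
  then show ?thesis
    by (auto simp: block_def)
qed

lemma blocks_containing:
  assumes "0 < s" "q < t * s"
  shows "{i. i < t \<and> q \<in> block s i} = {q div s}"
proof -
  have "q \<in> block s i \<longleftrightarrow> i = q div s" for i
  proof
    assume "q \<in> block s i"
    then have "i * s \<le> q" "q < (i + 1) * s"
      by (auto simp: block_def)
    then show "i = q div s"
      using assms(1) by (metis add.commute div_nat_eqI mult.commute plus_1_eq_Suc)
  next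
    assume "i = q div s"
    moreover have "q div s * s \<le> q"
      by (metis div_mult_mod_eq le_add1)
    moreover have "q < s + q div s * s"
      using mod_less_divisor[OF assms(1), of q] div_mult_mod_eq[of q s] by linarith
    ultimately show "q \<in> block s i"
      by (auto simp: block_def)
  qed
  moreover have "q div s < t"
    using assms by (simp add: div_less_iff_less_mult)
  ultimately show ?thesis
    by auto
qed

lemma length_filter_upt: "length (filter P [0..<t]) = card {i. i < t \<and> P i}"
  unfolding length_filter_conv_card by (rule arg_cong[where f = card]) auto

lemma block_indicators_sum:
  fixes s t :: nat
  assumes "0 < s"
  defines "xs \<equiv> map (\<lambda>i. indicator_list (t * s) (block s i)) [0..<t]"
  shows "set xs \<subseteq> weight_slice (t * s) s" "bxor_sum (t * s) xs = replicate (t * s) True"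
proof -
  have "indicator_list (t * s) (block s i) \<in> weight_slice (t * s) s" if "i < t" for i
    using block_subset[OF that] by (intro indicator_list_in_weight_slice) (simp_all add: block_def)
  then show "set xs \<subseteq> weight_slice (t * s) s"
    by (auto simp: xs_def)
  have len: "\<forall>x\<in>set xs. length x = t * s"
    by (simp add: xs_def)
  have "length (filter (\<lambda>x. x ! q) xs) = 1" if "q < t * s" for q
  proof -
    have "length (filter (\<lambda>x. x ! q) xs) = length (filter (\<lambda>i. q \<in> block s i) [0..<t])"
      using that by (simp add: xs_def o_def)
    also have "\<dots> = card {i. i < t \<and> q \<in> block s i}"
      by (rule length_filter_upt)
    finally show ?thesis
      using blocks_containing[OF assms(1) that] by simp
  qed
  then show "bxor_sum (t * s) xs = replicate (t * s) True"
    using len by (intro nth_equalityI) (simp_all add: length_bxor_sum nth_bxor_sum)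
qed

lemma coblock_indicators_sum:
  fixes s t :: nat
  assumes "0 < s" "odd t"
  defines "xs \<equiv> map (\<lambda>i. indicator_list (t * s) ({..<t * s} - block s i)) [0..<t]"
  shows "set xs \<subseteq> weight_slice (t * s) (t * s - s)" "bxor_sum (t * s) xs = replicate (t * s) False"
proof -
  have "card ({..<t * s} - block s i) = t * s - s" if "i < t" for i
    using block_subset[OF that] by (simp add: card_Diff_subset block_def)
  then show "set xs \<subseteq> weight_slice (t * s) (t * s - s)"
    by (auto simp: xs_def intro: indicator_list_in_weight_slice)
  have len: "\<forall>x\<in>set xs. length x = t * s"
    by (simp add: xs_def)
  have "length (filter (\<lambda>x. x ! q) xs) = t - 1" if "q < t * s" for q
  proof -
    have "length (filter (\<lambda>x. x ! q) xs) = length (filter (\<lambda>i. q \<notin> block s i) [0..<t])"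
      using that by (simp add: xs_def o_def)
    also have "\<dots> = card ({..<t} - {i. i < t \<and> q \<in> block s i})"
      unfolding length_filter_upt by (rule arg_cong[where f = card]) auto
    also have "\<dots> = t - 1"
      using blocks_containing[OF assms(1) that] that assms(1) by (simp add: div_less_iff_less_mult)
    finally show ?thesis .
  qed
  then show "bxor_sum (t * s) xs = replicate (t * s) False"
    using len assms(2) by (intro nth_equalityI) (simp_all add: length_bxor_sum nth_bxor_sum)
qed

context
  fixes G :: "bool list \<Rightarrow> bool list" and k j :: nat
  assumes affine: "affine_bmap G (slice_dim 0 k) (slice_dim 0 j)"
    and ones: "G (replicate (slice_dim 0 k) True) = replicate (slice_dim 0 j) True"
    and maps: "\<forall>x\<in>weight_slice (slice_dim 0 k) (block_size 0 k).
      G x \<in> weight_slice (slice_dim 0 j) (block_size 0 j)"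
begin

lemma T1_slice_map_index_le: "j \<le> k"
proof -
  let ?t = "block_count 0 k" and ?s = "block_size 0 k" and ?d = "slice_dim 0 j"
  let ?xs = "map (\<lambda>i. indicator_list (?t * ?s) (block ?s i)) [0..<?t]"
  have dim: "slice_dim 0 k = ?t * ?s"
    by (simp add: slice_dim_def)
  have s: "0 < ?s"
    using block_size_ge_2[of 0 k] by simp
  note xs = block_indicators_sum[OF s, of ?t]
  have "bxor_sum ?d (map G ?xs) = G (bxor_sum (?t * ?s) ?xs)"
    using affine_bmap_bxor_sum_odd[OF affine[unfolded dim], of ?xs] by (simp add: block_count_def)
  also have "\<dots> = replicate ?d True"
    using xs(2) ones dim by simp
  finally have "?d \<le> length (map G ?xs) * block_size 0 j"
    using xs(1) maps dim by (intro weight_slice_sum_ones_bound) auto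
  then have "block_count 0 j * block_size 0 j \<le> ?t * block_size 0 j"
    by (simp add: slice_dim_def)
  then show "j \<le> k"
    using block_size_ge_2[of 0 j] by (simp add: block_count_def)
qed

lemma T1_slice_map_index_ge: "k \<le> j"
proof (rule ccontr)
  assume "\<not> k \<le> j"
  let ?N = "slice_dim 0 k" and ?s = "block_size 0 k" and ?d = "slice_dim 0 j"
  have half: "?N - ?s = 2 * ((k + 1) * ?s)"
    by (simp add: slice_dim_def block_count_def algebra_simps)
  moreover have "2 ^ ?d \<le> ?s"
    using \<open>\<not> k \<le> j\<close> by (simp add: two_pow_slice_dim_le_block_size)
  ultimately have "2 ^ ?d + 2 * ((k + 1) * ?s) \<le> card {..<?N}"
    using three_block_size_le_slice_dim[of 0 k] by simp
  then obtain P where P: "P \<subseteq> {..<?N}" "card P = ?N - ?s"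
    "G (bxor (replicate ?N True) (indicator_list ?N P)) = G (replicate ?N True)"
    using affine_bmap_flip_invariant[OF affine length_replicate finite_lessThan order_refl] half
    by metis
  have "bxor (replicate ?N True) (indicator_list ?N P) = indicator_list ?N ({..<?N} - P)"
    using P(1) by (intro nth_equalityI) auto
  moreover have "indicator_list ?N ({..<?N} - P) \<in> weight_slice ?N ?s"
    using P three_block_size_le_slice_dim[of 0 k]
    by (intro indicator_list_in_weight_slice) (auto simp: card_Diff_subset finite_subset)
  ultimately have "replicate ?d True \<in> weight_slice ?d (block_size 0 j)"
    using maps ones P(3) by metis
  moreover have "block_size 0 j < ?d"
    using three_block_size_le_slice_dim[of 0 j] block_size_ge_2[of 0 j] by simp
  ultimately show False
    using replicate_True_notin_weight_slice by blast
qed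

end

lemma le_of_mult_diff_le:
  fixes a t s :: nat
  assumes "a * (t * s - s) \<le> t * s * (a - 1)" "0 < s" "1 \<le> a" "1 \<le> t"
  shows "t \<le> a"
proof -
  have h: "int (a * (t * s - s)) \<le> int (t * s * (a - 1))"
    using assms(1) by linarith
  have "s \<le> t * s"
    using assms(4) by simp
  then have "int (t * s - s) = (int t - 1) * int s"
    by (simp add: algebra_simps)
  moreover have "int (a - 1) = int a - 1"
    using assms(3) by simp
  ultimately have "int a * ((int t - 1) * int s) \<le> int t * int s * (int a - 1)"
    using h by (simp only: of_nat_mult)
  then have "int a * (int t - 1) * int s \<le> int t * (int a - 1) * int s"
    by (simp add: algebra_simps)
  then have "int a * (int t - 1) \<le> int t * (int a - 1)"
    using assms(2) by simp
  then show ?thesis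
    by (simp add: algebra_simps)
qed

context
  fixes G :: "bool list \<Rightarrow> bool list" and k j :: nat
  assumes affine: "affine_bmap G (slice_dim 0 k) (slice_dim 0 j)"
    and zeros: "G (replicate (slice_dim 0 k) False) = replicate (slice_dim 0 j) False"
    and maps: "\<forall>x\<in>weight_slice (slice_dim 0 k) (slice_dim 0 k - block_size 0 k).
      G x \<in> weight_slice (slice_dim 0 j) (slice_dim 0 j - block_size 0 j)"
begin

lemma T0_slice_map_index_le: "j \<le> k"
proof -
  let ?t = "block_count 0 k" and ?s = "block_size 0 k" and ?d = "slice_dim 0 j"
  let ?t' = "block_count 0 j" and ?s' = "block_size 0 j"
  let ?xs = "map (\<lambda>i. indicator_list (?t * ?s) ({..<?t * ?s} - block ?s i)) [0..<?t]"
  have dim: "slice_dim 0 k = ?t * ?s"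
    by (simp add: slice_dim_def)
  have s: "0 < ?s"
    using block_size_ge_2[of 0 k] by simp
  have odd: "odd ?t"
    by (simp add: block_count_def)
  note xs = coblock_indicators_sum[OF s odd]
  have "bxor_sum ?d (map G ?xs) = G (bxor_sum (?t * ?s) ?xs)"
    using affine_bmap_bxor_sum_odd[OF affine[unfolded dim], of ?xs] odd by simp
  also have "\<dots> = replicate ?d False"
    using xs(2) zeros dim by simp
  finally have "length (map G ?xs) * (?d - ?s') \<le> ?d * (length (map G ?xs) - 1)"
    using xs(1) maps dim odd by (intro weight_slice_sum_zeros_bound) auto
  then have "?t * (?t' * ?s' - ?s') \<le> ?t' * ?s' * (?t - 1)"
    by (simp add: slice_dim_def)
  moreover have "0 < ?s'" "1 \<le> ?t" "1 \<le> ?t'"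
    using block_size_ge_2[of 0 j] by (simp_all add: block_count_def)
  ultimately have "?t' \<le> ?t"
    by (rule le_of_mult_diff_le)
  then show "j \<le> k"
    by (simp add: block_count_def)
qed

lemma T0_slice_map_index_ge: "k \<le> j"
proof (rule ccontr)
  assume "\<not> k \<le> j"
  let ?N = "slice_dim 0 k" and ?s = "block_size 0 k" and ?d = "slice_dim 0 j"
  have half: "?N - ?s = 2 * ((k + 1) * ?s)"
    by (simp add: slice_dim_def block_count_def algebra_simps)
  moreover have "2 ^ ?d \<le> ?s"
    using \<open>\<not> k \<le> j\<close> by (simp add: two_pow_slice_dim_le_block_size)
  ultimately have "2 ^ ?d + 2 * ((k + 1) * ?s) \<le> card {..<?N}"
    using three_block_size_le_slice_dim[of 0 k] by simp
  then obtain P where P: "P \<subseteq> {..<?N}" "card P = ?N - ?s"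
    "G (bxor (replicate ?N False) (indicator_list ?N P)) = G (replicate ?N False)"
    using affine_bmap_flip_invariant[OF affine length_replicate finite_lessThan order_refl] half
    by metis
  have "G (indicator_list ?N P) = replicate ?d False"
    using P(3) zeros by (simp add: bxor_commute[of "replicate _ _"] bxor_replicate_False)
  moreover have "indicator_list ?N P \<in> weight_slice ?N (?N - ?s)"
    using P by (intro indicator_list_in_weight_slice) auto
  ultimately have "replicate ?d False \<in> weight_slice ?d (?d - block_size 0 j)"
    using maps by metis
  moreover have "0 < ?d - block_size 0 j"
    using three_block_size_le_slice_dim[of 0 j] block_size_ge_2[of 0 j] by simp
  ultimately show False
    using replicate_False_notin_weight_slice by blast
qed

end

context
  fixes G :: "bool list \<Rightarrow> bool list" and k j :: nat
  assumes affine: "affine_bmap G (slice_dim 1 k) (slice_dim 1 j)"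
    and self_dual: "\<forall>x. length x = slice_dim 1 k \<longrightarrow> G (map Not x) = map Not (G x)"
    and maps: "\<forall>x\<in>weight_slice (slice_dim 1 k) (block_size 1 k).
      G x \<in> weight_slice (slice_dim 1 j) (block_size 1 j)"
begin

lemma S_slice_map_index_le: "j \<le> k"
proof -
  let ?t = "block_count 1 k" and ?s = "block_size 1 k" and ?d = "slice_dim 1 j"
  let ?xs = "map (\<lambda>i. indicator_list (?t * ?s) (block ?s i)) [0..<?t]"
  have dim: "slice_dim 1 k = ?t * ?s"
    by (simp add: slice_dim_def)
  have s: "0 < ?s"
    using block_size_ge_2[of 1 k] by simp
  note xs = block_indicators_sum[OF s, of ?t]
  have "bxor_sum ?d (map G ?xs) = replicate ?d True"
    using affine_bmap_bxor_sum_even_self_dual[OF affine[unfolded dim] self_dual[unfolded dim] _ _ _ xs(2)]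
    by (simp add: block_count_def)
  then have "?d \<le> length (map G ?xs) * block_size 1 j"
    using xs(1) maps dim by (intro weight_slice_sum_ones_bound) auto
  then have "block_count 1 j * block_size 1 j \<le> ?t * block_size 1 j"
    by (simp add: slice_dim_def)
  then show "j \<le> k"
    using block_size_ge_2[of 1 j] by (simp add: block_count_def)
qed

lemma S_slice_map_index_ge: "k \<le> j"
proof (rule ccontr)
  assume "\<not> k \<le> j"
  let ?N = "slice_dim 1 k" and ?s = "block_size 1 k" and ?d = "slice_dim 1 j"
  let ?z = "indicator_list ?N {..<?s}"
  have half: "?N - 2 * ?s = 2 * ((k + 1) * ?s)"
    by (simp add: slice_dim_def block_count_def algebra_simps)
  moreover have "2 ^ ?d \<le> ?s"
    using \<open>\<not> k \<le> j\<close> by (simp add: two_pow_slice_dim_le_block_size)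
  ultimately have bound: "2 ^ ?d + 2 * ((k + 1) * ?s) \<le> card {?s..<?N}"
    using three_block_size_le_slice_dim[of 1 k] by simp
  have len: "length (map Not ?z) = ?N" and sub: "{?s..<?N} \<subseteq> {..<?N}"
    by auto
  \<comment> \<open>Flipping pairs turns the complement of \<open>?z\<close> into a vector of the same weight as \<open>?z\<close>,
    so both \<open>G ?z\<close> and its complement have weight \<open>block_size 1 j\<close>.\<close>
  obtain P where P: "P \<subseteq> {?s..<?N}" "card P = ?N - 2 * ?s"
    "G (bxor (map Not ?z) (indicator_list ?N P)) = G (map Not ?z)"
    using affine_bmap_flip_invariant[OF affine len finite_atLeastLessThan sub bound] half by metis
  have "bxor (map Not ?z) (indicator_list ?N P) = indicator_list ?N ({?s..<?N} - P)"
    using P(1) by (intro nth_equalityI) auto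
  then have "G (indicator_list ?N ({?s..<?N} - P)) = map Not (G ?z)"
    using P(3) self_dual by simp
  moreover have "indicator_list ?N ({?s..<?N} - P) \<in> weight_slice ?N ?s"
    using P three_block_size_le_slice_dim[of 1 k]
    by (intro indicator_list_in_weight_slice) (auto simp: card_Diff_subset finite_subset)
  ultimately have "map Not (G ?z) \<in> weight_slice ?d (block_size 1 j)"
    using maps by metis
  moreover have "G ?z \<in> weight_slice ?d (block_size 1 j)"
    using maps three_block_size_le_slice_dim[of 1 k]
    by (simp add: indicator_list_in_weight_slice)
  ultimately have "?d = 2 * block_size 1 j"
    using map_Not_in_weight_slice by blast
  then show False
    using three_block_size_le_slice_dim[of 1 j] block_size_ge_2[of 1 j] by simp
qed

end

section \<open>Partial functions and tuples of clone members\<close>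

lemma P2_undefined: "(n, f) \<in> P2 \<Longrightarrow> length x \<noteq> n \<Longrightarrow> f x = None"
  unfolding P2_def by blast

lemma O2_defined: "(n, f) \<in> O2 \<Longrightarrow> length x = n \<Longrightarrow> f x \<noteq> None"
  unfolding O2_def by blast

lemma P2_arity_pos: "(n, f) \<in> P2 \<Longrightarrow> 1 \<le> n"
  unfolding P2_def by blast

lemma O2_subset_P2: "O2 \<subseteq> P2"
  unfolding O2_def by blast

lemma restriction_of_refl: "restriction_of F F"
  by (simp add: restriction_of_def)

lemma restriction_of_trans: "restriction_of F G \<Longrightarrow> restriction_of G H \<Longrightarrow> restriction_of F H"
  by (auto simp: restriction_of_def)

lemma restriction_of_P2: "restriction_of G F \<Longrightarrow> F \<in> P2 \<Longrightarrow> G \<in> P2"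
  by (cases G; cases F) (auto simp: restriction_of_def P2_def)

lemma total_restriction_eq:
  assumes "(n, g) \<in> O2" "(n, h) \<in> O2" "\<And>x. g x \<noteq> None \<Longrightarrow> g x = h x"
  shows "g = h"
proof
  fix x
  show "g x = h x"
  proof (cases "length x = n")
    case True
    with assms(1) have "g x \<noteq> None"
      by (rule O2_defined)
    then show ?thesis
      by (rule assms(3))
  next
    case False
    then show ?thesis
      using assms(1,2) O2_subset_P2 P2_undefined by (metis subsetD)
  qed
qed

lemma total_cloneD:
  assumes "total_clone D"
  shows "D \<subseteq> P2" "D \<subseteq> O2" "1 \<le> n \<Longrightarrow> i < n \<Longrightarrow> proj n i \<in> D"
    "(n, f) \<in> D \<Longrightarrow> \<forall>i<n. (m, gs i) \<in> D \<Longrightarrow> pcomp (n, f) m gs \<in> D"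
  using assms by (auto simp: total_clone_def partial_clone_def)

lemma fst_pcomp [simp]: "fst (pcomp F m gs) = m"
  by (cases F) (simp add: pcomp_def)

lemma pcomp_eq: "pcomp F m gs = (m, snd (pcomp F m gs))"
  by (metis fst_pcomp prod.collapse)

lemma foldr_neq_eq: "foldr (\<noteq>) l a = (foldr (\<noteq>) l False \<noteq> a)"
  by (induction l) auto

lemma foldr_neq_map2_bxor:
  "length as = length x \<Longrightarrow> length y = length x \<Longrightarrow>
   foldr (\<noteq>) (map2 (\<and>) as (bxor x y)) False =
     (foldr (\<noteq>) (map2 (\<and>) as x) False \<noteq> foldr (\<noteq>) (map2 (\<and>) as y) False)"
proof (induction as arbitrary: x y)
  case (Cons a as)
  then obtain b x' c y' where "x = b # x'" "y = c # y'"
    by (metis length_Suc_conv)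
  then show ?case
    using Cons by (auto simp: bxor_def)
qed (simp add: bxor_def)

lemma Lin_bxor3:
  assumes "(n, f) \<in> Lin" "length x = n" "length y = n" "length z = n"
  shows "f (bxor x (bxor y z)) = Some (the (f x) \<noteq> (the (f y) \<noteq> the (f z)))"
proof -
  obtain a0 as where as: "length as = n"
    and f: "\<And>x. length x = n \<Longrightarrow> f x = Some (foldr (\<noteq>) (map2 (\<and>) as x) a0)"
    using assms(1) by (auto simp: Lin_def)
  define p where "p x = foldr (\<noteq>) (map2 (\<and>) as x) False" for x
  have fp: "f x = Some (p x \<noteq> a0)" if "length x = n" for x
    unfolding f[OF that] p_def by (subst foldr_neq_eq) (rule refl)
  have "p (bxor y z) = (p y \<noteq> p z)"
    unfolding p_def using assms(3,4) as by (intro foldr_neq_map2_bxor) simp_all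
  moreover have "p (bxor x (bxor y z)) = (p x \<noteq> p (bxor y z))"
    unfolding p_def using assms(2-4) as by (intro foldr_neq_map2_bxor) simp_all
  ultimately have "p (bxor x (bxor y z)) = (p x \<noteq> (p y \<noteq> p z))"
    by simp
  moreover have "((p x \<noteq> (p y \<noteq> p z)) \<noteq> a0) = ((p x \<noteq> a0) \<noteq> ((p y \<noteq> a0) \<noteq> (p z \<noteq> a0)))"
    by auto
  ultimately show ?thesis
    using assms(2-4) fp[of "bxor x (bxor y z)"] fp[of x] fp[of y] fp[of z] by simp
qed

definition clone_tuple :: "pfun set \<Rightarrow> nat \<Rightarrow> nat \<Rightarrow> (nat \<Rightarrow> bool list \<Rightarrow> bool option) \<Rightarrow> bool" where
  "clone_tuple D n d gs \<longleftrightarrow> (\<forall>i<d. (n, gs i) \<in> D)"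

text \<open>A \<open>d\<close>-tuple of \<open>n\<close>-ary members of \<open>D\<close> is applied componentwise; the \<open>the\<close> is harmless
  because members of a total clone are defined on all of \<open>2^n\<close>.\<close>
definition tuple_apply :: "(nat \<Rightarrow> bool list \<Rightarrow> bool option) \<Rightarrow> nat \<Rightarrow> bool list \<Rightarrow> bool list" where
  "tuple_apply gs d x = map (\<lambda>i. the (gs i x)) [0..<d]"

lemma length_tuple_apply [simp]: "length (tuple_apply gs d x) = d"
  by (simp add: tuple_apply_def)

lemma nth_tuple_apply [simp]: "i < d \<Longrightarrow> tuple_apply gs d x ! i = the (gs i x)"
  by (simp add: tuple_apply_def)

lemma clone_tuple_pcomp:
  assumes "total_clone D" "clone_tuple D n d gs" "clone_tuple D m n hs"
  shows "clone_tuple D m d (\<lambda>q. snd (pcomp (n, gs q) m hs))"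
proof -
  have "pcomp (n, gs q) m hs \<in> D" if "q < d" for q
    using total_cloneD(4)[OF assms(1)] assms(2,3) that by (auto simp: clone_tuple_def)
  then show ?thesis
    unfolding clone_tuple_def by (metis pcomp_eq)
qed

lemma pcomp_defined_args:
  assumes "snd (pcomp (n, f) m gs) x \<noteq> None"
    and "\<And>i x. i < n \<Longrightarrow> gs i x \<noteq> None \<Longrightarrow> gs i x = hs i x"
  shows "snd (pcomp (n, f) m gs) x = f (tuple_apply hs n x)" "f (tuple_apply hs n x) \<noteq> None"
    "length x = m" "\<forall>i<n. hs i x \<noteq> None"
proof -
  have x: "length x = m" "\<forall>i<n. gs i x \<noteq> None"
    using assms(1) by (auto simp: pcomp_def split: if_splits)
  then have "map (\<lambda>i. the (gs i x)) [0..<n] = tuple_apply hs n x"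
    using assms(2) by (simp add: tuple_apply_def)
  then show "snd (pcomp (n, f) m gs) x = f (tuple_apply hs n x)" "f (tuple_apply hs n x) \<noteq> None"
    using assms(1) x by (simp_all add: pcomp_def)
  show "length x = m" "\<forall>i<n. hs i x \<noteq> None"
    using x assms(2) by metis+
qed

lemma clone_tuple_proj:
  assumes "total_clone D" "1 \<le> n"
  shows "clone_tuple D n n (\<lambda>i. snd (proj n i))"
  using total_cloneD(3)[OF assms] by (simp add: clone_tuple_def proj_def)

lemma tuple_apply_proj: "length x = n \<Longrightarrow> tuple_apply (\<lambda>i. snd (proj n i)) n x = x"
  by (rule nth_equalityI) (simp_all add: proj_def)

lemma clone_tuple_affine:
  assumes DL: "D \<subseteq> Lin" and gs: "clone_tuple D n d gs"
  shows "affine_bmap (tuple_apply gs d) n d"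
  unfolding affine_bmap_def
proof (intro conjI allI impI)
  fix x y z :: "bool list"
  assume xyz: "length x = n" "length y = n" "length z = n"
  have "gs i (bxor x (bxor y z)) = Some (the (gs i x) \<noteq> (the (gs i y) \<noteq> the (gs i z)))" if "i < d" for i
    using Lin_bxor3[OF _ xyz] gs DL that by (auto simp: clone_tuple_def)
  then show "tuple_apply gs d (bxor x (bxor y z))
      = bxor (tuple_apply gs d x) (bxor (tuple_apply gs d y) (tuple_apply gs d z))"
    by (intro nth_equalityI) simp_all
qed simp

lemma clone_tuple_T:
  assumes "D \<subseteq> T a" "clone_tuple D n d gs"
  shows "tuple_apply gs d (replicate n a) = replicate d a"
proof (rule nth_equalityI)
  fix i
  assume "i < length (tuple_apply gs d (replicate n a))"
  then have "i < d" "(n, gs i) \<in> T a"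
    using assms by (auto simp: clone_tuple_def)
  then show "tuple_apply gs d (replicate n a) ! i = replicate d a ! i"
    by (simp add: T_def)
qed simp

lemma clone_tuple_S:
  assumes "D \<subseteq> S" "clone_tuple D n d gs" "length x = n"
  shows "tuple_apply gs d (map Not x) = map Not (tuple_apply gs d x)"
proof (rule nth_equalityI)
  fix i
  assume "i < length (tuple_apply gs d (map Not x))"
  then have "i < d" "(n, gs i) \<in> S"
    using assms(1,2) by (auto simp: clone_tuple_def)
  moreover have "gs i x \<noteq> None"
    using \<open>(n, gs i) \<in> S\<close> assms(3) O2_defined by (auto simp: S_def)
  ultimately show "tuple_apply gs d (map Not x) ! i = map Not (tuple_apply gs d x) ! i"
    using assms(3) by (auto simp: S_def)
qed simp

section \<open>A strong partial clone for every set of indices\<close>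

definition restrictions :: "pfun set \<Rightarrow> pfun set" where
  "restrictions D = {G. \<exists>H\<in>D. restriction_of G H}"

definition maps_into_family ::
    "pfun set \<Rightarrow> (nat \<Rightarrow> bool list set) \<Rightarrow> (nat \<Rightarrow> nat) \<Rightarrow> nat set \<Rightarrow> nat \<Rightarrow> bool list set \<Rightarrow> bool" where
  "maps_into_family D F N A n Y \<longleftrightarrow>
     (\<exists>j\<in>A. \<exists>gs. clone_tuple D n (N j) gs \<and> (\<forall>x\<in>Y. tuple_apply gs (N j) x \<in> F j))"

definition family_clone :: "pfun set \<Rightarrow> (nat \<Rightarrow> bool list set) \<Rightarrow> (nat \<Rightarrow> nat) \<Rightarrow> nat set \<Rightarrow> pfun set" where
  "family_clone D F N A =
     restrictions D \<union> {(n, f). (n, f) \<in> P2 \<and> maps_into_family D F N A n {x. f x \<noteq> None}}"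

lemma subset_restrictions: "D \<subseteq> restrictions D"
  using restriction_of_refl by (auto simp: restrictions_def)

lemma restrictions_subset_P2: "total_clone D \<Longrightarrow> restrictions D \<subseteq> P2"
  using total_cloneD(1) restriction_of_P2 by (fastforce simp: restrictions_def)

lemma restrictionsE:
  assumes "(m, g) \<in> restrictions D"
  obtains h where "(m, h) \<in> D" "\<And>x. g x \<noteq> None \<Longrightarrow> g x = h x"
proof -
  obtain H where H: "H \<in> D" "restriction_of (m, g) H"
    using assms by (auto simp: restrictions_def)
  then have "H = (m, snd H)"
    by (cases H) (simp add: restriction_of_def)
  with H that show ?thesis
    by (metis restriction_of_def snd_conv)
qed

lemma restrictions_tupleE:
  assumes "\<forall>i<n. (m, gs i) \<in> restrictions D"
  obtains hs where "clone_tuple D m n hs" "\<And>i x. i < n \<Longrightarrow> gs i x \<noteq> None \<Longrightarrow> gs i x = hs i x"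
proof -
  have "\<forall>i<n. \<exists>h. (m, h) \<in> D \<and> (\<forall>x. gs i x \<noteq> None \<longrightarrow> gs i x = h x)"
    using assms by (metis restrictionsE)
  then obtain hs where hs: "\<forall>i<n. (m, hs i) \<in> D \<and> (\<forall>x. gs i x \<noteq> None \<longrightarrow> gs i x = hs i x)"
    by metis
  show ?thesis
  proof (rule that)
    show "clone_tuple D m n hs"
      using hs by (simp add: clone_tuple_def)
    show "\<And>i x. i < n \<Longrightarrow> gs i x \<noteq> None \<Longrightarrow> gs i x = hs i x"
      using hs by blast
  qed
qed

lemma maps_into_family_mono:
  "maps_into_family D F N A n Y \<Longrightarrow> Y' \<subseteq> Y \<Longrightarrow> maps_into_family D F N A n Y'"
  unfolding maps_into_family_def by blast

lemma restrictions_pcomp: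
  assumes D: "total_clone D" and f: "(n, f) \<in> restrictions D"
    and gs: "\<forall>i<n. (m, gs i) \<in> restrictions D"
  shows "pcomp (n, f) m gs \<in> restrictions D"
proof -
  obtain f0 where f0: "(n, f0) \<in> D" "\<And>x. f x \<noteq> None \<Longrightarrow> f x = f0 x"
    by (rule restrictionsE[OF f]) blast
  obtain hs where hs: "clone_tuple D m n hs" "\<And>i x. i < n \<Longrightarrow> gs i x \<noteq> None \<Longrightarrow> gs i x = hs i x"
    by (rule restrictions_tupleE[OF gs]) blast
  have "pcomp (n, f0) m hs \<in> D"
    using total_cloneD(4)[OF D f0(1)] hs(1) by (simp add: clone_tuple_def)
  moreover have "restriction_of (pcomp (n, f) m gs) (pcomp (n, f0) m hs)"
    unfolding restriction_of_def
  proof (intro conjI allI impI)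
    show "fst (pcomp (n, f) m gs) = fst (pcomp (n, f0) m hs)"
      by (simp add: pcomp_def)
    fix x
    assume x: "snd (pcomp (n, f) m gs) x \<noteq> None"
    note args = pcomp_defined_args[OF x hs(2)]
    then show "snd (pcomp (n, f) m gs) x = snd (pcomp (n, f0) m hs) x"
      using f0(2) by (simp add: pcomp_def tuple_apply_def)
  qed
  ultimately show ?thesis
    by (auto simp: restrictions_def)
qed

lemma maps_into_family_pcomp:
  assumes D: "total_clone D" and f: "maps_into_family D F N A n {x. f x \<noteq> None}"
    and gs: "\<forall>i<n. (m, gs i) \<in> restrictions D"
  shows "maps_into_family D F N A m {x. snd (pcomp (n, f) m gs) x \<noteq> None}"
proof -
  obtain j ks where j: "j \<in> A" "clone_tuple D n (N j) ks"
    "\<And>y. f y \<noteq> None \<Longrightarrow> tuple_apply ks (N j) y \<in> F j"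
    using f by (auto simp: maps_into_family_def)
  obtain hs where hs: "clone_tuple D m n hs" "\<And>i x. i < n \<Longrightarrow> gs i x \<noteq> None \<Longrightarrow> gs i x = hs i x"
    by (rule restrictions_tupleE[OF gs]) blast
  let ?ks = "\<lambda>q. snd (pcomp (n, ks q) m hs)"
  have "tuple_apply ?ks (N j) x \<in> F j" if "snd (pcomp (n, f) m gs) x \<noteq> None" for x
  proof -
    note args = pcomp_defined_args[OF that hs(2)]
    then have "tuple_apply ?ks (N j) x = tuple_apply ks (N j) (tuple_apply hs n x)"
      by (simp add: tuple_apply_def pcomp_def)
    then show ?thesis
      using j(3) args(2) by simp
  qed
  then show ?thesis
    using j(1) clone_tuple_pcomp[OF D j(2) hs(1)] unfolding maps_into_family_def by blast
qed

lemma family_clone_subset_P2: "total_clone D \<Longrightarrow> family_clone D F N A \<subseteq> P2"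
  using restrictions_subset_P2 by (auto simp: family_clone_def)

lemma restrictions_subset_family_clone: "restrictions D \<subseteq> family_clone D F N A"
  by (simp add: family_clone_def)

lemma family_cloneI:
  "G \<in> P2 \<Longrightarrow> maps_into_family D F N A (fst G) {x. snd G x \<noteq> None} \<Longrightarrow> G \<in> family_clone D F N A"
  by (cases G) (simp add: family_clone_def)

lemma family_cloneD:
  "G \<in> family_clone D F N A \<Longrightarrow> G \<notin> restrictions D \<Longrightarrow>
     maps_into_family D F N A (fst G) {x. snd G x \<noteq> None}"
  by (cases G) (simp add: family_clone_def)

lemma family_clone_pcomp:
  assumes D: "total_clone D" and f: "(n, f) \<in> family_clone D F N A"
    and gs: "\<forall>i<n. (m, gs i) \<in> family_clone D F N A"
  shows "pcomp (n, f) m gs \<in> family_clone D F N A"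
proof -
  have "1 \<le> n"
    using f family_clone_subset_P2[OF D] P2_arity_pos by blast
  then have "(m, gs 0) \<in> family_clone D F N A"
    using gs by simp
  then have "1 \<le> m"
    using family_clone_subset_P2[OF D] P2_arity_pos by blast
  then have P2: "pcomp (n, f) m gs \<in> P2"
    by (auto simp: pcomp_def P2_def)
  consider (restr) "(n, f) \<in> restrictions D" "\<forall>i<n. (m, gs i) \<in> restrictions D"
    | (f_maps) "maps_into_family D F N A n {x. f x \<noteq> None}" "\<forall>i<n. (m, gs i) \<in> restrictions D"
    | (g_maps) i where "i < n" "maps_into_family D F N A m {x. gs i x \<noteq> None}"
    using f gs by (auto simp: family_clone_def)
  then show ?thesis
  proof cases
    case restr
    then show ?thesis
      using restrictions_pcomp[OF D] by (simp add: family_clone_def)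
  next
    case f_maps
    then show ?thesis
      using maps_into_family_pcomp[OF D] family_cloneI[OF P2] by simp
  next
    case (g_maps i)
    then have "maps_into_family D F N A m {x. snd (pcomp (n, f) m gs) x \<noteq> None}"
      by (elim maps_into_family_mono) (auto simp: pcomp_def split: if_splits)
    then show ?thesis
      using family_cloneI[OF P2] by simp
  qed
qed

lemma family_clone_restriction:
  assumes D: "total_clone D" and F0: "F0 \<in> family_clone D F N A" and G: "restriction_of G F0"
  shows "G \<in> family_clone D F N A"
proof (cases "F0 \<in> restrictions D")
  case True
  then have "G \<in> restrictions D"
    using G restriction_of_trans unfolding restrictions_def by blast
  then show ?thesis
    using restrictions_subset_family_clone by blast
next
  case False
  have fst: "fst G = fst F0"
    using G by (simp add: restriction_of_def)
  have "maps_into_family D F N A (fst F0) {x. snd F0 x \<noteq> None}"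
    using F0 False by (rule family_cloneD)
  moreover have "{x. snd G x \<noteq> None} \<subseteq> {x. snd F0 x \<noteq> None}"
    using G by (auto simp: restriction_of_def)
  ultimately have "maps_into_family D F N A (fst G) {x. snd G x \<noteq> None}"
    unfolding fst by (rule maps_into_family_mono)
  moreover have "G \<in> P2"
    using G F0 family_clone_subset_P2[OF D] restriction_of_P2 by blast
  ultimately show ?thesis
    by (simp add: family_cloneI)
qed

lemma family_clone_strong:
  assumes D: "total_clone D"
  shows "strong (family_clone D F N A)"
proof -
  have "partial_clone (family_clone D F N A)"
    unfolding partial_clone_def
  proof (intro conjI allI impI)
    fix n i :: nat
    assume "1 \<le> n" "i < n"
    then have "proj n i \<in> D"
      by (rule total_cloneD(3)[OF D])
    then show "proj n i \<in> family_clone D F N A"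
      using subset_restrictions[of D] restrictions_subset_family_clone[of D F N A] by blast
  next
    fix n m f gs
    assume "(n, f) \<in> family_clone D F N A" "\<forall>i<n. (m, gs i) \<in> family_clone D F N A"
    then show "pcomp (n, f) m gs \<in> family_clone D F N A"
      by (rule family_clone_pcomp[OF D])
  qed (rule family_clone_subset_P2[OF D])
  then show ?thesis
    unfolding strong_def using family_clone_restriction[OF D] by blast
qed

lemma restrictions_Int_O2:
  assumes D: "total_clone D"
  shows "restrictions D \<inter> O2 \<subseteq> D"
proof
  fix G
  assume G: "G \<in> restrictions D \<inter> O2"
  obtain n g where g: "G = (n, g)"
    by (cases G)
  obtain h where h: "(n, h) \<in> D" "\<And>x. g x \<noteq> None \<Longrightarrow> g x = h x"
    using G unfolding g by (elim IntE restrictionsE) blast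
  have "(n, g) \<in> O2" "(n, h) \<in> O2"
    using G g h(1) total_cloneD(2)[OF D] by auto
  then have "g = h"
    using h(2) by (rule total_restriction_eq)
  then show "G \<in> D"
    using g h(1) by simp
qed

lemma family_clone_total_part:
  assumes D: "total_clone D"
    and no_total_map: "\<And>n j gs. 1 \<le> n \<Longrightarrow> clone_tuple D n (N j) gs \<Longrightarrow>
      \<exists>x. length x = n \<and> tuple_apply gs (N j) x \<notin> F j"
  shows "family_clone D F N A \<inter> O2 = D"
proof (intro equalityI subsetI)
  fix G
  assume "G \<in> D"
  then show "G \<in> family_clone D F N A \<inter> O2"
    using total_cloneD(2)[OF D] subset_restrictions[of D] restrictions_subset_family_clone[of D F N A]
    by blast
next
  fix G
  assume G: "G \<in> family_clone D F N A \<inter> O2"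
  obtain n g where g: "G = (n, g)"
    by (cases G)
  have total: "{x. length x = n} \<subseteq> {x. g x \<noteq> None}"
    using G g O2_defined by blast
  show "G \<in> D"
  proof (cases "G \<in> restrictions D")
    case True
    then show ?thesis
      using G restrictions_Int_O2[OF D] by blast
  next
    case False
    then have "maps_into_family D F N A (fst G) {x. snd G x \<noteq> None}"
      using G family_cloneD by blast
    then have "maps_into_family D F N A n {x. g x \<noteq> None}"
      using g by simp
    then have "maps_into_family D F N A n {x. length x = n}"
      using total by (rule maps_into_family_mono)
    then obtain j gs where "clone_tuple D n (N j) gs" "\<forall>x. length x = n \<longrightarrow> tuple_apply gs (N j) x \<in> F j"
      by (auto simp: maps_into_family_def)
    moreover have "1 \<le> n"
      using G g O2_subset_P2 P2_arity_pos by blast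
    ultimately show ?thesis
      using no_total_map by blast
  qed
qed

definition point_indicator :: "(nat \<Rightarrow> bool list set) \<Rightarrow> (nat \<Rightarrow> nat) \<Rightarrow> bool list \<Rightarrow> nat \<Rightarrow> pfun" where
  "point_indicator F N p k = (N k, \<lambda>x. if x \<in> F k then Some (x = p) else None)"

lemma point_indicator_in_family_clone:
  assumes D: "total_clone D" and "1 \<le> N k" and F: "F k \<subseteq> {x. length x = N k}" and "k \<in> A"
  shows "point_indicator F N p k \<in> family_clone D F N A"
proof (rule family_cloneI)
  show "point_indicator F N p k \<in> P2"
    unfolding point_indicator_def P2_def using assms(2) F by auto
  have "tuple_apply (\<lambda>i. snd (proj (N k) i)) (N k) x \<in> F k" if "x \<in> F k" for x
    using that F tuple_apply_proj[of x "N k"] by auto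
  then have "maps_into_family D F N A (N k) (F k)"
    using clone_tuple_proj[OF D assms(2)] \<open>k \<in> A\<close> unfolding maps_into_family_def by blast
  then show "maps_into_family D F N A (fst (point_indicator F N p k))
      {x. snd (point_indicator F N p k) x \<noteq> None}"
    by (simp add: point_indicator_def)
qed

lemma point_indicator_notin_family_clone:
  assumes DL: "D \<subseteq> Lin" and F: "F k \<subseteq> {x. length x = N k}"
    and rigid: "\<And>j gs. clone_tuple D (N k) (N j) gs \<Longrightarrow> \<forall>x\<in>F k. tuple_apply gs (N j) x \<in> F j \<Longrightarrow> j = k"
    and triple: "{p, z1, z2, z3} \<subseteq> F k" "p \<notin> {z1, z2, z3}" "bxor z1 (bxor z2 z3) = p"
    and "k \<notin> A"
  shows "point_indicator F N p k \<notin> family_clone D F N A"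
proof
  assume member: "point_indicator F N p k \<in> family_clone D F N A"
  show False
  proof (cases "point_indicator F N p k \<in> restrictions D")
    case True
    then obtain h where h: "(N k, h) \<in> D" "\<And>x. x \<in> F k \<Longrightarrow> h x = Some (x = p)"
      unfolding point_indicator_def by (rule restrictionsE) (metis option.distinct(1))
    have "length z1 = N k" "length z2 = N k" "length z3 = N k"
      using triple(1) F by auto
    \<comment> \<open>A linear \<open>h\<close> has \<open>h p = h z1 + h z2 + h z3\<close>, which the indicator of \<open>p\<close> violates.\<close>
    then have "h p = Some (the (h z1) \<noteq> (the (h z2) \<noteq> the (h z3)))"
      using Lin_bxor3[of "N k" h] h(1) DL triple(3) by blast
    then show False
      using h(2) triple by auto
  next
    case False
    moreover have "{x. snd (point_indicator F N p k) x \<noteq> None} = F k"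
      by (auto simp: point_indicator_def)
    ultimately have "maps_into_family D F N A (N k) (F k)"
      using family_cloneD[OF member] by (simp add: point_indicator_def)
    then show False
      using rigid \<open>k \<notin> A\<close> unfolding maps_into_family_def by blast
  qed
qed

lemma Pow_nat_lepoll_I_str:
  fixes F :: "nat \<Rightarrow> bool list set" and N :: "nat \<Rightarrow> nat"
  assumes D: "total_clone D" and DL: "D \<subseteq> Lin"
    and N: "\<And>k. 1 \<le> N k" and F: "\<And>k. F k \<subseteq> {x. length x = N k}"
    and rigid: "\<And>k j gs. clone_tuple D (N k) (N j) gs \<Longrightarrow> \<forall>x\<in>F k. tuple_apply gs (N j) x \<in> F j \<Longrightarrow> j = k"
    and no_total_map: "\<And>n j gs. 1 \<le> n \<Longrightarrow> clone_tuple D n (N j) gs \<Longrightarrow>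
      \<exists>x. length x = n \<and> tuple_apply gs (N j) x \<notin> F j"
    and triple: "\<And>k. \<exists>p z1 z2 z3. {p, z1, z2, z3} \<subseteq> F k \<and> p \<notin> {z1, z2, z3} \<and> bxor z1 (bxor z2 z3) = p"
  shows "(UNIV :: nat set set) \<lesssim> I_str D"
proof -
  have "family_clone D F N A \<in> I_str D" for A
    using family_clone_strong[OF D] family_clone_total_part[OF D no_total_map] by (simp add: I_str_def)
  moreover have mem: "k \<in> B" if "k \<in> A" "family_clone D F N A = family_clone D F N B" for k A B
  proof (rule ccontr)
    assume "k \<notin> B"
    obtain p z1 z2 z3 where "{p, z1, z2, z3} \<subseteq> F k" "p \<notin> {z1, z2, z3}" "bxor z1 (bxor z2 z3) = p"
      using triple by blast
    with \<open>k \<notin> B\<close> have "point_indicator F N p k \<notin> family_clone D F N B"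
      by (intro point_indicator_notin_family_clone[where F = F and N = N and k = k, OF DL F rigid])
    moreover have "point_indicator F N p k \<in> family_clone D F N A"
      using point_indicator_in_family_clone[OF D N F \<open>k \<in> A\<close>] .
    ultimately show False
      using that(2) by simp
  qed
  have "inj (family_clone D F N)"
  proof (rule injI)
    fix A B
    assume "family_clone D F N A = family_clone D F N B"
    then show "A = B"
      using mem[of _ A B] mem[of _ B A] by blast
  qed
  ultimately show ?thesis
    unfolding lepoll_def by blast
qed

lemma Pow_nat_lepoll_I_str_weight_slices:
  fixes N w :: "nat \<Rightarrow> nat"
  assumes D: "total_clone D" and DL: "D \<subseteq> Lin"
    and w: "\<And>k. 2 \<le> w k" "\<And>k. w k + 2 \<le> N k"
    and rigid: "\<And>k j gs. clone_tuple D (N k) (N j) gs \<Longrightarrow>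
      \<forall>x\<in>weight_slice (N k) (w k). tuple_apply gs (N j) x \<in> weight_slice (N j) (w j) \<Longrightarrow> j = k"
    and no_total_map: "\<And>n j gs. 1 \<le> n \<Longrightarrow> clone_tuple D n (N j) gs \<Longrightarrow>
      \<exists>x. length x = n \<and> tuple_apply gs (N j) x \<notin> weight_slice (N j) (w j)"
  shows "(UNIV :: nat set set) \<lesssim> I_str D"
proof (rule Pow_nat_lepoll_I_str[OF D DL _ _ rigid no_total_map])
  show "1 \<le> N k" for k
    using w[of k] by simp
  show "weight_slice (N k) (w k) \<subseteq> {x. length x = N k}" for k
    by (auto simp: weight_slice_def)
  show "\<exists>p z1 z2 z3. {p, z1, z2, z3} \<subseteq> weight_slice (N k) (w k) \<and> p \<notin> {z1, z2, z3} \<and>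
      bxor z1 (bxor z2 z3) = p" for k
    using w by (rule weight_slice_xor_triple)
qed

lemma Pow_nat_lepoll_I_str_T0:
  assumes D: "total_clone D" and DL: "D \<subseteq> Lin" and DT: "D \<subseteq> T False"
  shows "(UNIV :: nat set set) \<lesssim> I_str D"
proof (rule Pow_nat_lepoll_I_str_weight_slices[OF D DL, where N = "slice_dim 0"
      and w = "\<lambda>k. slice_dim 0 k - block_size 0 k"])
  fix k
  show "2 \<le> slice_dim 0 k - block_size 0 k" "slice_dim 0 k - block_size 0 k + 2 \<le> slice_dim 0 k"
    using three_block_size_le_slice_dim[of 0 k] block_size_ge_2[of 0 k] by simp_all
next
  fix k j gs
  assume gs: "clone_tuple D (slice_dim 0 k) (slice_dim 0 j) gs"
    and "\<forall>x\<in>weight_slice (slice_dim 0 k) (slice_dim 0 k - block_size 0 k).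
      tuple_apply gs (slice_dim 0 j) x \<in> weight_slice (slice_dim 0 j) (slice_dim 0 j - block_size 0 j)"
  with clone_tuple_affine[OF DL gs] clone_tuple_T[OF DT gs] show "j = k"
    using T0_slice_map_index_le T0_slice_map_index_ge by (meson antisym)
next
  fix n j gs
  assume "1 \<le> n" "clone_tuple D n (slice_dim 0 j) gs"
  then have "tuple_apply gs (slice_dim 0 j) (replicate n False) = replicate (slice_dim 0 j) False"
    using clone_tuple_T[OF DT] by blast
  moreover have "0 < slice_dim 0 j - block_size 0 j"
    using three_block_size_le_slice_dim[of 0 j] block_size_ge_2[of 0 j] by simp
  ultimately show "\<exists>x. length x = n \<and> tuple_apply gs (slice_dim 0 j) x
      \<notin> weight_slice (slice_dim 0 j) (slice_dim 0 j - block_size 0 j)"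
    by (metis length_replicate replicate_False_notin_weight_slice)
qed

lemma Pow_nat_lepoll_I_str_T1:
  assumes D: "total_clone D" and DL: "D \<subseteq> Lin" and DT: "D \<subseteq> T True"
  shows "(UNIV :: nat set set) \<lesssim> I_str D"
proof (rule Pow_nat_lepoll_I_str_weight_slices[OF D DL, where N = "slice_dim 0" and w = "block_size 0"])
  fix k
  show "2 \<le> block_size 0 k" "block_size 0 k + 2 \<le> slice_dim 0 k"
    using three_block_size_le_slice_dim[of 0 k] block_size_ge_2[of 0 k] by simp_all
next
  fix k j gs
  assume gs: "clone_tuple D (slice_dim 0 k) (slice_dim 0 j) gs"
    and "\<forall>x\<in>weight_slice (slice_dim 0 k) (block_size 0 k).
      tuple_apply gs (slice_dim 0 j) x \<in> weight_slice (slice_dim 0 j) (block_size 0 j)"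
  with clone_tuple_affine[OF DL gs] clone_tuple_T[OF DT gs] show "j = k"
    using T1_slice_map_index_le T1_slice_map_index_ge by (meson antisym)
next
  fix n j gs
  assume "1 \<le> n" "clone_tuple D n (slice_dim 0 j) gs"
  then have "tuple_apply gs (slice_dim 0 j) (replicate n True) = replicate (slice_dim 0 j) True"
    using clone_tuple_T[OF DT] by blast
  moreover have "block_size 0 j < slice_dim 0 j"
    using three_block_size_le_slice_dim[of 0 j] block_size_ge_2[of 0 j] by simp
  ultimately show "\<exists>x. length x = n \<and> tuple_apply gs (slice_dim 0 j) x
      \<notin> weight_slice (slice_dim 0 j) (block_size 0 j)"
    by (metis length_replicate replicate_True_notin_weight_slice)
qed

lemma Pow_nat_lepoll_I_str_S:
  assumes D: "total_clone D" and DL: "D \<subseteq> Lin" and DS: "D \<subseteq> S"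
  shows "(UNIV :: nat set set) \<lesssim> I_str D"
proof (rule Pow_nat_lepoll_I_str_weight_slices[OF D DL, where N = "slice_dim 1" and w = "block_size 1"])
  fix k
  show "2 \<le> block_size 1 k" "block_size 1 k + 2 \<le> slice_dim 1 k"
    using three_block_size_le_slice_dim[of 1 k] block_size_ge_2[of 1 k] by simp_all
next
  fix k j gs
  assume gs: "clone_tuple D (slice_dim 1 k) (slice_dim 1 j) gs"
    and "\<forall>x\<in>weight_slice (slice_dim 1 k) (block_size 1 k).
      tuple_apply gs (slice_dim 1 j) x \<in> weight_slice (slice_dim 1 j) (block_size 1 j)"
  moreover have "\<forall>x. length x = slice_dim 1 k \<longrightarrow>
      tuple_apply gs (slice_dim 1 j) (map Not x) = map Not (tuple_apply gs (slice_dim 1 j) x)"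
    using clone_tuple_S[OF DS gs] by blast
  ultimately show "j = k"
    using clone_tuple_affine[OF DL gs] S_slice_map_index_le S_slice_map_index_ge by (meson antisym)
next
  fix n j gs
  assume "1 \<le> n" and gs: "clone_tuple D n (slice_dim 1 j) gs"
  let ?y = "tuple_apply gs (slice_dim 1 j) (replicate n False)"
  have "tuple_apply gs (slice_dim 1 j) (map Not (replicate n False)) = map Not ?y"
    using clone_tuple_S[OF DS gs, of "replicate n False"] by simp
  moreover have "slice_dim 1 j \<noteq> 2 * block_size 1 j"
    using three_block_size_le_slice_dim[of 1 j] block_size_ge_2[of 1 j] by simp
  ultimately show "\<exists>x. length x = n \<and> tuple_apply gs (slice_dim 1 j) x
      \<notin> weight_slice (slice_dim 1 j) (block_size 1 j)"
    using map_Not_in_weight_slice[of ?y] by (metis length_map length_replicate)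
qed

section \<open>Counting\<close>

definition pfun_code :: "pfun \<Rightarrow> nat \<times> bool option list" where
  "pfun_code F = (fst F, map (snd F) (List.n_lists (fst F) [False, True]))"

lemma inj_on_pfun_code: "inj_on pfun_code P2"
proof (rule inj_onI)
  fix F G
  assume F: "F \<in> P2" and G: "G \<in> P2" and eq: "pfun_code F = pfun_code G"
  obtain n f m g where F': "F = (n, f)" and G': "G = (m, g)"
    by (cases F, cases G)
  then have "m = n"
    using eq by (simp add: pfun_code_def)
  then have codes: "map f (List.n_lists n [False, True]) = map g (List.n_lists n [False, True])"
    using eq F' G' by (simp add: pfun_code_def)
  have "f x = g x" for x
  proof (cases "length x = n")
    case True
    then have "x \<in> set (List.n_lists n [False, True])"
      by (auto simp: set_n_lists)
    then show ?thesis
      using codes by simp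
  next
    case False
    then show ?thesis
      using F G F' G' \<open>m = n\<close> P2_undefined by metis
  qed
  then show "F = G"
    using F' G' \<open>m = n\<close> by auto
qed

lemma countable_P2: "countable P2"
  using countable_image_inj_on[OF countableI_type inj_on_pfun_code] .

lemma I_str_lepoll_Pow_nat: "I_str D \<lesssim> (UNIV :: nat set set)"
proof -
  obtain g :: "pfun \<Rightarrow> nat" where g: "inj_on g P2"
    using countable_P2 unfolding countable_def by blast
  have "I_str D \<subseteq> Pow P2"
    by (auto simp: I_str_def strong_def partial_clone_def)
  then have "inj_on (image g) (I_str D)"
    using inj_on_image_Pow[OF g] inj_on_subset by blast
  then show ?thesis
    unfolding lepoll_def by blast
qed

theorem mainTheorem7:
  fixes D :: "pfun set"
  assumes "total_clone D"
    and "D \<subseteq> Lin"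
    and "\<exists>B \<in> {T False, T True, S}. D \<subseteq> B"
  shows "I_str D \<approx> (UNIV :: real set)"
proof -
  have "(UNIV :: nat set set) \<lesssim> I_str D"
    using assms Pow_nat_lepoll_I_str_T0 Pow_nat_lepoll_I_str_T1 Pow_nat_lepoll_I_str_S by blast
  then have "I_str D \<approx> (UNIV :: nat set set)"
    using I_str_lepoll_Pow_nat by (rule lepoll_antisym[rotated])
  then show ?thesis
    using nat_sets_eqpoll_reals by (rule eqpoll_trans)
qed

end
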